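(* Let $\Sigma$ be an alphabet with $|\Sigma|\ge 3$. A function $f\colon\Sigma^*\to\Sigma^*$ is congruence preserving if and only if it is RCP.
   Context: $\Sigma^*$ denotes the free monoid over $\Sigma$ (finite words, concatenation, empty word $\varepsilon$). A congruence on $\Sigma^*$ is an equivalence relation $\sim$ such that $u\sim v$ and $u'\sim v'$ imply $uu'\sim vv'$. A function $f\colon(\Sigma^* )^k\to\Sigma^*$ is congruence preserving (CP) if for every congruence $\sim$ on $\Sigma^*$ and all $u_i\sim v_i$ ($i=1,\ldots,k$), $f(u_1,\ldots,u_k)\sim f(v_1,\ldots,v_k)$. A restricted congruence on $\Sigma^*$ is the kernel $\{(u,v)\mid \varphi(u)=\varphi(v)\}$ of a monoid morphism $\varphi\colon\Sigma^*\to\Sigma^*$. A function $f\colon(\Sigma^* )^k\to\Sigma^*$ is RCP if for every monoid morphism $\varphi\colon\Sigma^*\to\Sigma^*$ and all $u_1,\ldots,u_k,v_1,\ldots,v_k$ with $\varphi(u_i)=\varphi(v_i)$ for all $i$, we have $\varphi(f(u_1,\ldots,u_k))=\varphi(f(v_1,\ldots,v_k))$. *)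

theory Defs
  imports Main
begin

definition word_congruence :: "('a list \<times> 'a list) set \<Rightarrow> bool" where
  "word_congruence R \<longleftrightarrow> equiv UNIV R \<and>
     (\<forall>u v u' v'. (u, v) \<in> R \<longrightarrow> (u', v') \<in> R \<longrightarrow> (u @ u', v @ v') \<in> R)"

definition congruence_preserving :: "('a list \<Rightarrow> 'a list) \<Rightarrow> bool" where
  "congruence_preserving f \<longleftrightarrow>
     (\<forall>R u v. word_congruence R \<longrightarrow> (u, v) \<in> R \<longrightarrow> (f u, f v) \<in> R)"

definition monoid_morphism :: "('a list \<Rightarrow> 'a list) \<Rightarrow> bool" where
  "monoid_morphism \<phi> \<longleftrightarrow> \<phi> [] = [] \<and> (\<forall>u v. \<phi> (u @ v) = \<phi> u @ \<phi> v)"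

definition RCP :: "('a list \<Rightarrow> 'a list) \<Rightarrow> bool" where
  "RCP f \<longleftrightarrow>
     (\<forall>\<phi> u v. monoid_morphism \<phi> \<longrightarrow> \<phi> u = \<phi> v \<longrightarrow> \<phi> (f u) = \<phi> (f v))"

end

theory Submission
  imports Defs
begin

text \<open>
  The kernel of a monoid morphism is a congruence, so congruence preserving functions are RCP.
  Conversely, let \<open>f\<close> be RCP and let the alphabet have at least three letters.
  Erasing a letter \<open>s\<close> and identifying \<open>s\<close> with \<open>t\<close> are morphisms;
  applied to \<open>f []\<close>, \<open>f [s]\<close> and \<open>f [t]\<close> they force every position of
  \<open>f [s]\<close> to carry either a fixed letter or \<open>s\<close> itself, and the fixed letters to spell
  \<open>f []\<close>. So \<open>f\<close> agrees on words of length at most one with the instantiation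
  \<open>x \<mapsto> u\<^sub>0 x u\<^sub>1 \<dots> x u\<^sub>n\<close> of a pattern, which is RCP and congruence preserving.
  Two RCP functions agreeing on such words agree everywhere, by induction on the number of
  distinct letters of the argument \<open>x\<close>: for a letter \<open>c\<close> not occurring in \<open>x\<close> the
  substitution \<open>c \<mapsto> x\<close> sends both \<open>[c]\<close> and \<open>x\<close> to \<open>x\<close>, identifying two
  letters of \<open>x\<close> leaves fewer letters, and whenever two such morphisms are available
  (which the three letters guarantee) they jointly determine a word.
\<close>

lemma word_congruence_kernel:
  "monoid_morphism \<phi> \<Longrightarrow> word_congruence {(x, y). \<phi> x = \<phi> y}"
  unfolding word_congruence_def equiv_def refl_on_def sym_def trans_def monoid_morphism_def
  by auto

lemma congruence_preserving_imp_RCP: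
  assumes "congruence_preserving f"
  shows "RCP f"
  using assms word_congruence_kernel unfolding congruence_preserving_def RCP_def by blast

lemma RCPD: "RCP f \<Longrightarrow> monoid_morphism \<phi> \<Longrightarrow> \<phi> u = \<phi> v \<Longrightarrow> \<phi> (f u) = \<phi> (f v)"
  unfolding RCP_def by blast

lemma monoid_morphism_map: "monoid_morphism (map h)"
  by (simp add: monoid_morphism_def)

lemma monoid_morphism_filter: "monoid_morphism (filter P)"
  by (simp add: monoid_morphism_def)

definition subst_letter :: "'a \<Rightarrow> 'a list \<Rightarrow> 'a list \<Rightarrow> 'a list" where
  "subst_letter c v w = concat (map (\<lambda>y. if y = c then v else [y]) w)"

lemma subst_letter_simps [simp]:
  "subst_letter c v [] = []"
  "subst_letter c v (y # w) = (if y = c then v else [y]) @ subst_letter c v w"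
  by (simp_all add: subst_letter_def)

lemma monoid_morphism_subst_letter: "monoid_morphism (subst_letter c v)"
  by (simp add: monoid_morphism_def subst_letter_def)

lemma subst_letter_fresh: "c \<notin> set w \<Longrightarrow> subst_letter c v w = w"
  by (induction w) auto

definition identify :: "'a \<Rightarrow> 'a \<Rightarrow> 'a \<Rightarrow> 'a" where
  "identify d a y = (if y = d then a else y)"

text \<open>A pattern is a word in which \<open>None\<close> marks the occurrences of the variable.\<close>

type_synonym 'a pattern = "'a option list"

definition instantiate :: "'a pattern \<Rightarrow> 'a list \<Rightarrow> 'a list" where
  "instantiate p x = concat (map (case_option x (\<lambda>l. [l])) p)"

lemma instantiate_simps [simp]:
  "instantiate [] x = []"
  "instantiate (None # p) x = x @ instantiate p x"
  "instantiate (Some l # p) x = l # instantiate p x"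
  by (simp_all add: instantiate_def)

lemma RCP_instantiate: "RCP (instantiate p)"
  unfolding RCP_def
proof (intro allI impI)
  fix \<phi> :: "'a list \<Rightarrow> 'a list" and u v
  assume \<phi>: "monoid_morphism \<phi>" and uv: "\<phi> u = \<phi> v"
  have append: "\<phi> (x @ y) = \<phi> x @ \<phi> y" for x y
    using \<phi> by (simp add: monoid_morphism_def)
  show "\<phi> (instantiate p u) = \<phi> (instantiate p v)"
  proof (induction p)
    case (Cons q p)
    show ?case
    proof (cases q)
      case None
      then show ?thesis using Cons.IH uv by (simp add: append)
    next
      case (Some l)
      then have "instantiate (q # p) w = [l] @ instantiate p w" for w by simp
      then show ?thesis using Cons.IH by (simp only: append)
    qed
  qed simp
qed

lemma congruence_preserving_instantiate: "congruence_preserving (instantiate p)"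
  unfolding congruence_preserving_def
proof (intro allI impI)
  fix R :: "('a list \<times> 'a list) set" and u v
  assume R: "word_congruence R" and uv: "(u, v) \<in> R"
  have refl: "(x, x) \<in> R" for x
    using R unfolding word_congruence_def equiv_def refl_on_def by auto
  have append: "(x @ x', y @ y') \<in> R" if "(x, y) \<in> R" "(x', y') \<in> R" for x y x' y'
    using R that unfolding word_congruence_def by blast
  show "(instantiate p u, instantiate p v) \<in> R"
  proof (induction p)
    case Nil
    then show ?case using refl by simp
  next
    case (Cons q p)
    show ?case
    proof (cases q)
      case None
      with append[OF uv Cons.IH] show ?thesis by simp
    next
      case (Some l)
      with append[OF refl Cons.IH, of "[l]"] show ?thesis by simp
    qed
  qed
qed

lemma obtain_two_elements:
  assumes "2 \<le> card S"
  obtains a b where "a \<in> S" "b \<in> S" "a \<noteq> b"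
  using obtain_subset_with_card_n[OF assms] card_2_iff by (metis insert_subset)

lemma obtain_three_elements:
  assumes "3 \<le> card S"
  obtains a b c where "a \<in> S" "b \<in> S" "c \<in> S" "a \<noteq> b" "a \<noteq> c" "b \<noteq> c"
  using obtain_subset_with_card_n[OF assms] card_3_iff by (metis insert_subset)

lemma ex_distinct_from_two:
  fixes a b :: "'a::finite"
  assumes "3 \<le> card (UNIV :: 'a set)"
  shows "\<exists>u::'a. u \<noteq> a \<and> u \<noteq> b"
proof -
  have "card {a, b} \<le> 2"
    by (cases "a = b") auto
  then have "card {a, b} < card (UNIV :: 'a set)"
    using assms by simp
  then have "{a, b} \<noteq> UNIV" by auto
  then show ?thesis by auto
qed

lemma map_identify_eq_imp_eq:
  assumes "a \<noteq> d" "a' \<noteq> d" "a \<noteq> a'"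
    and "map (identify d a) w = map (identify d a) w'"
    and "map (identify d a') w = map (identify d a') w'"
  shows "w = w'"
  using assms(4,5)
proof (induction w arbitrary: w')
  case (Cons y w)
  then show ?case using assms(1-3) by (cases w') (auto simp: identify_def split: if_splits)
qed simp

lemma subst_letter_identify_eq_imp_eq:
  assumes "c \<noteq> a" "c \<noteq> d" "a \<noteq> d"
    and "subst_letter c v w = subst_letter c v w'"
    and "map (identify d a) w = map (identify d a) w'"
  shows "w = w'"
  using assms(4,5)
proof (induction w arbitrary: w')
  case (Cons y w)
  then show ?case using assms(1-3) by (cases w') (auto simp: identify_def split: if_splits)
qed simp

lemma subst_letter_eq_imp_eq:
  assumes "b \<noteq> c" "v \<noteq> []" "b \<notin> set v" "c \<notin> set v"
    and "subst_letter b v w = subst_letter b v w'"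
    and "subst_letter c v w = subst_letter c v w'"
  shows "w = w'"
  using assms(5,6)
proof (induction w arbitrary: w')
  case Nil
  then show ?case using assms(2) by (cases w') (auto split: if_splits)
next
  case (Cons y w)
  then show ?case
    using assms(1-4) by (cases w') (auto simp: Cons_eq_append_conv split: if_splits)
qed

lemma RCP_subst_letter_fresh:
  assumes "RCP f" "c \<notin> set x"
  shows "subst_letter c x (f x) = subst_letter c x (f [c])"
proof (rule RCPD[OF assms(1) monoid_morphism_subst_letter])
  show "subst_letter c x x = subst_letter c x [c]"
    using assms(2) by (simp add: subst_letter_fresh)
qed

lemma RCP_identify:
  assumes "RCP f" "a \<noteq> d"
  shows "map (identify d a) (f x) = map (identify d a) (f (map (identify d a) x))"
proof (rule RCPD[OF assms(1) monoid_morphism_map])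
  show "map (identify d a) x = map (identify d a) (map (identify d a) x)"
    using assms(2) by (simp add: identify_def)
qed

lemma card_set_map_identify_less:
  assumes "a \<in> set x" "d \<in> set x" "a \<noteq> d"
  shows "card (set (map (identify d a) x)) < card (set x)"
proof (rule psubset_card_mono)
  show "set (map (identify d a) x) \<subset> set x"
    using assms by (auto simp: identify_def)
qed simp

lemma RCP_eq_if_eq_on_letters:
  fixes f g :: "'a::finite list \<Rightarrow> 'a list"
  assumes card: "3 \<le> card (UNIV :: 'a set)" and f: "RCP f" and g: "RCP g"
    and empty: "f [] = g []" and letters: "\<And>s. f [s] = g [s]"
  shows "f = g"
proof
  fix x
  show "f x = g x"
  proof (induction "card (set x)" arbitrary: x rule: less_induct)
    case less
    have substitute: "subst_letter c x (f x) = subst_letter c x (g x)" if "c \<notin> set x" for c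
      using RCP_subst_letter_fresh[OF f that] RCP_subst_letter_fresh[OF g that] letters by simp
    have merge: "map (identify d a) (f x) = map (identify d a) (g x)"
      if "a \<in> set x" "d \<in> set x" "a \<noteq> d" for a d
      using RCP_identify[OF f that(3), of x] RCP_identify[OF g that(3), of x]
        less[OF card_set_map_identify_less[OF that]] by metis
    have card_fresh: "card (UNIV - set x) = card (UNIV :: 'a set) - card (set x)"
      by (simp add: card_Diff_subset)
    consider (none) "card (set x) = 0" | (one) "card (set x) = 1" | (two) "card (set x) = 2"
      | (many) "3 \<le> card (set x)"
      by linarith
    then show "f x = g x"
    proof cases
      case none
      then show ?thesis using empty by simp
    next
      case one
      then have "2 \<le> card (UNIV - set x)" using card_fresh card by simp
      then obtain b c where bc: "b \<in> UNIV - set x" "c \<in> UNIV - set x" "b \<noteq> c"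
        by (rule obtain_two_elements)
      have "x \<noteq> []" using one by auto
      with bc show ?thesis
        using substitute subst_letter_eq_imp_eq[of b c x "f x" "g x"] by blast
    next
      case two
      then have "2 \<le> card (set x)" by simp
      then obtain a d where ad: "a \<in> set x" "d \<in> set x" "a \<noteq> d"
        by (rule obtain_two_elements)
      have "set x \<noteq> UNIV" using two card by auto
      then obtain c where "c \<notin> set x" by auto
      with ad show ?thesis
        using substitute merge subst_letter_identify_eq_imp_eq[of c a d x "f x" "g x"] by blast
    next
      case many
      then obtain a a' d
        where "a \<in> set x" "a' \<in> set x" "d \<in> set x" "a \<noteq> a'" "a \<noteq> d" "a' \<noteq> d"
        by (rule obtain_three_elements)
      then show ?thesis using merge map_identify_eq_imp_eq[of a d a' "f x" "g x"] by blast
    qed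
  qed
qed

lemma identify_invariant_const_or_id:
  fixes g :: "'a \<Rightarrow> 'a"
  assumes third: "\<And>a b :: 'a. \<exists>u. u \<noteq> a \<and> u \<noteq> b"
    and inv: "\<And>r t. identify r t (g r) = identify r t (g t)"
  shows "g = id \<or> (\<exists>c. g = (\<lambda>_. c))"
proof -
  have pair: "{g r, g t} = {r, t}" if "g r \<noteq> g t" for r t
    using inv[of r t] that unfolding identify_def by (auto split: if_splits)
  have "g r = r" if nonconst: "g t \<noteq> g r'" for r t r'
  proof (rule ccontr)
    assume gr: "g r \<noteq> r"
    obtain s where s: "g s \<noteq> g r" using nonconst by metis
    then have "g r = s" "g s = r" "s \<noteq> r" using pair[OF s[symmetric]] gr by auto
    moreover obtain u where u: "u \<noteq> r" "u \<noteq> s" using third[of r s] by blast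
    ultimately have "g u = g r" using pair[of r u] by (metis doubleton_eq_iff)
    with \<open>g r = s\<close> \<open>g s = r\<close> \<open>s \<noteq> r\<close> u show False
      using pair[of s u] by (metis doubleton_eq_iff)
  qed
  then show ?thesis by (metis eq_id_iff ext)
qed

lemma filter_all_but_one_eq_imp_eq:
  fixes u v :: "'a list"
  assumes third: "\<And>a b :: 'a. \<exists>u. u \<noteq> a \<and> u \<noteq> b"
    and "\<And>s. filter (\<lambda>y. y \<noteq> s) u = filter (\<lambda>y. y \<noteq> s) v"
  shows "u = v"
  using assms(2)
proof (induction u arbitrary: v)
  case Nil
  show ?case
  proof (cases v)
    case (Cons y v')
    obtain s where "s \<noteq> y" using third[of y y] by blast
    with Nil[of s] Cons show ?thesis by simp
  qed simp
next
  case (Cons x u)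
  obtain r where "r \<noteq> x" using third[of x x] by blast
  with Cons.prems[of r] obtain y v' where v: "v = y # v'" by (cases v) auto
  obtain s where "s \<noteq> x" "s \<noteq> y" using third[of x y] by blast
  with Cons.prems[of s] v have "x = y" by simp
  moreover have "filter (\<lambda>z. z \<noteq> t) u = filter (\<lambda>z. z \<noteq> t) v'" for t
    using Cons.prems[of t] v \<open>x = y\<close> by (auto split: if_splits)
  ultimately show ?case using Cons.IH v by blast
qed

lemma instantiate_singleton: "instantiate p [s] = map (case_option s id) p"
  by (induction p) (auto split: option.split)

lemma filter_instantiate_singleton:
  "filter (\<lambda>y. y \<noteq> s) (instantiate p [s]) = filter (\<lambda>y. y \<noteq> s) (instantiate p [])"
  by (induction p) (simp_all add: instantiate_def split: option.split)

lemma ex_pattern_of_letter_values: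
  fixes T :: "'a::finite \<Rightarrow> 'a list"
  assumes card: "3 \<le> card (UNIV :: 'a set)"
    and erase: "\<And>s. filter (\<lambda>y. y \<noteq> s) (T s) = filter (\<lambda>y. y \<noteq> s) e"
    and merge: "\<And>s t. map (identify s t) (T s) = map (identify s t) (T t)"
  shows "\<exists>p. instantiate p [] = e \<and> (\<forall>s. instantiate p [s] = T s)"
proof -
  have third: "\<And>a b :: 'a. \<exists>u. u \<noteq> a \<and> u \<noteq> b"
    using ex_distinct_from_two[OF card] by blast
  obtain a b :: 'a where "a \<noteq> b" using third by metis
  define L where "L = length (T a)"
  have len: "length (T s) = L" for s
    using merge[of s a] unfolding L_def by (metis length_map)
  have column: "(\<lambda>s. T s ! i) = id \<or> (\<exists>c. (\<lambda>s. T s ! i) = (\<lambda>_. c))" if "i < L" for i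
  proof (rule identify_invariant_const_or_id[OF third])
    fix r t
    show "identify r t (T r ! i) = identify r t (T t ! i)"
      using merge[of r t] len that by (metis nth_map)
  qed
  \<comment> \<open>constant columns are exactly those on which two distinct letters give the same entry\<close>
  define p where "p = map (\<lambda>i. if T a ! i = T b ! i then Some (T a ! i) else None) [0..<L]"
  have singleton: "instantiate p [s] = T s" for s
  proof (rule nth_equalityI)
    show "length (instantiate p [s]) = length (T s)"
      by (simp add: instantiate_singleton p_def len)
    fix i
    assume "i < length (instantiate p [s])"
    then have "i < L" by (simp add: instantiate_singleton p_def)
    with column[OF this] \<open>a \<noteq> b\<close> show "instantiate p [s] ! i = T s ! i"
      by (auto simp: instantiate_singleton p_def fun_eq_iff)
  qed
  have "instantiate p [] = e"
  proof (rule filter_all_but_one_eq_imp_eq[OF third])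
    fix s
    show "filter (\<lambda>y. y \<noteq> s) (instantiate p []) = filter (\<lambda>y. y \<noteq> s) e"
      using filter_instantiate_singleton[of s p] singleton[of s] erase[of s] by simp
  qed
  with singleton show ?thesis by blast
qed

lemma RCP_imp_instantiate:
  fixes f :: "'a::finite list \<Rightarrow> 'a list"
  assumes card: "3 \<le> card (UNIV :: 'a set)" and f: "RCP f"
  shows "\<exists>p. f = instantiate p"
proof -
  have "filter (\<lambda>y. y \<noteq> s) (f [s]) = filter (\<lambda>y. y \<noteq> s) (f [])" for s
    by (rule RCPD[OF f monoid_morphism_filter]) simp
  moreover have "map (identify s t) (f [s]) = map (identify s t) (f [t])" for s t
    by (rule RCPD[OF f monoid_morphism_map]) (simp add: identify_def)
  ultimately obtain p where "instantiate p [] = f []" "\<And>s. instantiate p [s] = f [s]"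
    using ex_pattern_of_letter_values[OF card, of "\<lambda>s. f [s]" "f []"] by blast
  then have "instantiate p = f"
    using RCP_eq_if_eq_on_letters[OF card RCP_instantiate f] by blast
  then show ?thesis by blast
qed

theorem mainTheorem4:
  fixes f :: "'a::finite list \<Rightarrow> 'a list"
  assumes "card (UNIV :: 'a set) \<ge> 3"
  shows "congruence_preserving f \<longleftrightarrow> RCP f"
proof
  show "congruence_preserving f \<Longrightarrow> RCP f"
    by (rule congruence_preserving_imp_RCP)
next
  assume "RCP f"
  then obtain p where "f = instantiate p"
    using RCP_imp_instantiate assms by blast
  then show "congruence_preserving f"
    using congruence_preserving_instantiate by simp
qed

end
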